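(* Let $\lambda_h>0$ and suppose $\Psi(s,y)=G(s)H(y)$ has product form with $\int_0^\infty y\,dG(y)<\infty$. Then for every $x>1$, $$E\,W_{\lambda_h}(1;x)-x+1\le\lambda_h\int_0^\infty y\,dG(y)\,[1-H(x-1)].$$
   Context: The $M/G/1+H$ queue with rate $\lambda_h$ and initial workload $x$ is defined as follows. - It is a single-server FCFS queue with infinite waiting room. - There is one initial customer with remaining service $x$. - Arrivals form a Poisson process of rate $\lambda_h$. - Customers have iid service times with cdf $G$ and iid patience times with cdf $H$ (on $(0,\infty]$), all mutually independent and independent of the arrivals. - A customer arriving at $T$ with patience $Y$ joins if and only if $Y\ge W(T-)$, where $W$ is the workload (decreasing at unit rate while positive), and then adds his service time. $W_{\lambda_h}(t;x)$ is the workload at time $t$. *)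

theory Defs
  imports "HOL-Probability.Probability"
begin

text \<open>Deterministic construction of the workload of the M/G/1+H queue from
  interarrival times A (arrival k happens at time A 0 + ... + A k),
  service times S and patience times Y of the arriving customers.\<close>

text \<open>Workload just after the first n arrival epochs (n = 0: initial workload x).
  Arrival n sees workload p = max 0 (previous workload - A n) (the left limit
  W(T-)) and joins iff its patience is at least p.\<close>
fun wk_after :: "real \<Rightarrow> (nat \<Rightarrow> real) \<Rightarrow> (nat \<Rightarrow> real) \<Rightarrow> (nat \<Rightarrow> ereal) \<Rightarrow> nat \<Rightarrow> real" where
  "wk_after x A S Y 0 = x"
| "wk_after x A S Y (Suc n) =
     (let p = max 0 (wk_after x A S Y n - A n)
      in p + (if ereal p \<le> Y n then S n else 0))"

definition arrival_time :: "(nat \<Rightarrow> real) \<Rightarrow> nat \<Rightarrow> real" where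
  "arrival_time A k = (\<Sum>i\<le>k. A i)"

definition num_arrivals :: "(nat \<Rightarrow> real) \<Rightarrow> real \<Rightarrow> nat" where
  "num_arrivals A t = card {k. arrival_time A k \<le> t}"

text \<open>Workload at time t (right-continuous version).\<close>
definition workload :: "real \<Rightarrow> (nat \<Rightarrow> real) \<Rightarrow> (nat \<Rightarrow> real) \<Rightarrow> (nat \<Rightarrow> ereal) \<Rightarrow> real \<Rightarrow> real" where
  "workload x A S Y t =
     (let N = num_arrivals A t
      in max 0 (wk_after x A S Y N - (t - (\<Sum>i<N. A i))))"

end

theory Submission
  imports Defs
begin

text \<open>Before time 1 the initial workload x > 1 has not drained, so the server never idles and
  the workload at time 1 is x - 1 plus the work of the customers who joined by then. Customer k,
  arriving at T k, joins only if its patience is at least the workload x - T k it finds, which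
  exceeds x - 1 unless T k = 1, a null event. Since T k - A k is independent of customer k, and
  the interarrival time of customer k is independent of its service and patience times, the
  expected work admitted from customer k is at most P(T k \<le> 1) E[S; Y > x - 1]. Finally
  \<Sum>k P(T k \<le> 1) is the expected number \<lambda> of Poisson arrivals in [0, 1].\<close>

lemma finite_downclosed_nat_eq_lessThan_card:
  fixes K :: "nat set"
  assumes "finite K" and "\<And>j k. k \<in> K \<Longrightarrow> j \<le> k \<Longrightarrow> j \<in> K"
  shows "K = {..<card K}"
proof -
  define m where "m = (LEAST m. m \<notin> K)"
  have "\<exists>m. m \<notin> K"
    using assms(1) by (meson ex_new_if_finite infinite_UNIV_nat)
  then have m: "m \<notin> K"
    unfolding m_def by (rule LeastI_ex)
  have below_m: "j \<in> K" if "j < m" for j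
    using not_less_Least[OF that[unfolded m_def]] by simp
  have "K = {..<m}"
  proof (intro set_eqI iffI)
    fix k assume "k \<in> K"
    then show "k \<in> {..<m}"
      using m assms(2)[of k m] by (cases "m \<le> k") auto
  qed (simp add: below_m)
  then show ?thesis by simp
qed

lemma arrival_time_mono:
  assumes "\<And>i. 0 \<le> A i" and "j \<le> k"
  shows "arrival_time A j \<le> arrival_time A k"
  unfolding arrival_time_def using assms by (intro sum_mono2) auto

lemma arrival_time_eq_sum_lessThan: "arrival_time A k = (\<Sum>i<Suc k. A i)"
  unfolding arrival_time_def lessThan_Suc_atMost ..

lemma num_arrivals_eq_card:
  assumes "\<And>i. 0 \<le> A i" and "finite {k. arrival_time A k \<le> t}"
  shows "{k. arrival_time A k \<le> t} = {..<num_arrivals A t}"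
  unfolding num_arrivals_def using assms arrival_time_mono[of A]
  by (intro finite_downclosed_nat_eq_lessThan_card) (auto intro: order_trans)

text \<open>As long as the arrivals come before the initial workload x could have drained, the
  server never idles, and arrival k can only join if its patience is at least x - T k.\<close>
lemma wk_after_bounds:
  fixes A S :: "nat \<Rightarrow> real" and Y :: "nat \<Rightarrow> ereal"
  assumes A: "\<And>i. 0 \<le> A i" and S: "\<And>i. 0 \<le> S i"
    and before: "\<And>k. k < n \<Longrightarrow> arrival_time A k \<le> x"
  shows "x - (\<Sum>i<n. A i) \<le> wk_after x A S Y n
    \<and> wk_after x A S Y n \<le> x - (\<Sum>i<n. A i)
         + (\<Sum>k<n. if ereal (x - arrival_time A k) \<le> Y k then S k else 0)"
  using before
proof (induction n)
  case (Suc n)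
  let ?w = "wk_after x A S Y n"
  have IH: "x - (\<Sum>i<n. A i) \<le> ?w"
    "?w \<le> x - (\<Sum>i<n. A i) + (\<Sum>k<n. if ereal (x - arrival_time A k) \<le> Y k then S k else 0)"
    using Suc by auto
  have seen: "x - arrival_time A n \<le> ?w - A n"
    using IH(1) by (simp add: arrival_time_eq_sum_lessThan)
  moreover have "0 \<le> x - arrival_time A n"
    using Suc.prems by simp
  ultimately have busy: "max 0 (?w - A n) = ?w - A n"
    by linarith
  show ?case
  proof (cases "ereal (?w - A n) \<le> Y n")
    case True
    have "ereal (x - arrival_time A n) \<le> ereal (?w - A n)"
      using seen by simp
    then have "ereal (x - arrival_time A n) \<le> Y n"
      using True by (rule order_trans)
    with True show ?thesis
      using busy IH S[of n] by (simp add: Let_def)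
  next
    case False
    then show ?thesis
      using busy IH S[of n] by (simp add: Let_def)
  qed
qed simp

lemma workload_le_initial_plus_admitted:
  fixes A S :: "nat \<Rightarrow> real" and Y :: "nat \<Rightarrow> ereal"
  assumes A: "\<And>i. 0 \<le> A i" and S: "\<And>i. 0 \<le> S i" and "t \<le> x"
  shows "ennreal (workload x A S Y t) \<le> ennreal (x - t) +
    (\<Sum>k. if arrival_time A k \<le> t \<and> ereal (x - arrival_time A k) \<le> Y k then ennreal (S k) else 0)"
    (is "_ \<le> _ + suminf ?f")
proof (cases "finite {k. arrival_time A k \<le> t}")
  case False
  then have "num_arrivals A t = 0"
    by (simp add: num_arrivals_def)
  then show ?thesis
    using \<open>t \<le> x\<close> by (simp add: workload_def)
next
  case True
  define N where "N = num_arrivals A t"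
  define J where "J k = (if ereal (x - arrival_time A k) \<le> Y k then S k else 0)" for k
  have arrived: "{k. arrival_time A k \<le> t} = {..<N}"
    unfolding N_def using num_arrivals_eq_card[OF A True] .
  have J_nonneg: "0 \<le> J k" for k
    using S by (simp add: J_def)
  have "arrival_time A k \<le> t" if "k < N" for k
    using arrived that by blast
  then have "arrival_time A k \<le> x" if "k < N" for k
    using that \<open>t \<le> x\<close> by fastforce
  then have "wk_after x A S Y N \<le> x - (\<Sum>i<N. A i) + (\<Sum>k<N. J k)"
    using wk_after_bounds[where A=A and S=S, OF A S] unfolding J_def by blast
  then have "workload x A S Y t \<le> x - t + (\<Sum>k<N. J k)"
    using \<open>t \<le> x\<close> sum_nonneg[of "{..<N}" J] J_nonneg
    unfolding workload_def N_def[symmetric] Let_def by auto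
  then have "ennreal (workload x A S Y t) \<le> ennreal (x - t + (\<Sum>k<N. J k))"
    by (rule ennreal_leI)
  also have "\<dots> = ennreal (x - t) + (\<Sum>k<N. ennreal (J k))"
    using \<open>t \<le> x\<close> J_nonneg by (simp add: sum_nonneg)
  also have "(\<Sum>k<N. ennreal (J k)) = (\<Sum>k<N. ?f k)"
    using arrived by (intro sum.cong) (auto simp: J_def)
  also have "\<dots> \<le> suminf ?f"
    by (intro sum_le_suminf) auto
  finally show ?thesis
    by (simp add: add_left_mono)
qed

lemma nn_integral_pair_pair_mult:
  fixes f :: "'c \<times> 'd \<Rightarrow> ennreal" and g :: "'b \<Rightarrow> ennreal"
  assumes "prob_space P" and "prob_space E" and "prob_space GH"
    and f: "f \<in> borel_measurable (P \<Otimes>\<^sub>M E)" and g: "g \<in> borel_measurable GH"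
  shows "(\<integral>\<^sup>+ p. f (fst p, fst (snd p)) * g (snd (snd p)) \<partial>(P \<Otimes>\<^sub>M (E \<Otimes>\<^sub>M GH)))
       = (\<integral>\<^sup>+ t. \<integral>\<^sup>+ a. f (t, a) \<partial>E \<partial>P) * (\<integral>\<^sup>+ z. g z \<partial>GH)"
proof -
  interpret P: prob_space P by fact
  interpret E: prob_space E by fact
  interpret GH: prob_space GH by fact
  interpret EGH: pair_prob_space E GH ..
  have f_section: "(\<lambda>a. f (t, a)) \<in> borel_measurable E" if "t \<in> space P" for t
    using f that by measurable
  have "(\<integral>\<^sup>+ p. f (fst p, fst (snd p)) * g (snd (snd p)) \<partial>(P \<Otimes>\<^sub>M (E \<Otimes>\<^sub>M GH)))
      = (\<integral>\<^sup>+ t. \<integral>\<^sup>+ q. f (t, fst q) * g (snd q) \<partial>(E \<Otimes>\<^sub>M GH) \<partial>P)"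
    using f g by (subst EGH.nn_integral_fst[symmetric]) (auto intro!: nn_integral_cong)
  also have "\<dots> = (\<integral>\<^sup>+ t. \<integral>\<^sup>+ a. \<integral>\<^sup>+ z. f (t, a) * g z \<partial>GH \<partial>E \<partial>P)"
    using f_section g by (intro nn_integral_cong) (subst GH.nn_integral_fst[symmetric], auto)
  also have "\<dots> = (\<integral>\<^sup>+ t. (\<integral>\<^sup>+ a. f (t, a) \<partial>E) * (\<integral>\<^sup>+ z. g z \<partial>GH) \<partial>P)"
    using f_section g by (auto intro!: nn_integral_cong simp: nn_integral_cmult nn_integral_multc)
  also have "\<dots> = (\<integral>\<^sup>+ t. \<integral>\<^sup>+ a. f (t, a) \<partial>E \<partial>P) * (\<integral>\<^sup>+ z. g z \<partial>GH)"
    using f by (intro nn_integral_multc) (rule E.borel_measurable_nn_integral_fst)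
  finally show ?thesis .
qed

lemma suminf_erlang_CDF:
  fixes l t :: real
  assumes l: "0 < l" and t: "0 \<le> t"
  shows "(\<Sum>k. ennreal (erlang_CDF k l t)) = ennreal (l * t)"
proof -
  have density_sum: "(\<Sum>k. ennreal (erlang_density k l s)) = ennreal l" if "0 \<le> s" for s
  proof -
    have "(\<lambda>k. l * exp (- l * s) * ((l * s) ^ k /\<^sub>R fact k)) sums (l * exp (- l * s) * exp (l * s))"
      by (intro sums_mult exp_converges)
    then have "(\<lambda>k. erlang_density k l s) sums l"
      using that by (simp add: erlang_density_def exp_minus field_simps power_mult_distrib)
    then show ?thesis
      using l by (intro suminf_ennreal_eq) auto
  qed
  have "(\<Sum>k. ennreal (erlang_CDF k l t))
      = (\<Sum>k. \<integral>\<^sup>+ s. ennreal (erlang_density k l s) * indicator {..t} s \<partial>lborel)"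
    using nn_integral_erlang_density[OF l] by simp
  also have "\<dots> = (\<integral>\<^sup>+ s. (\<Sum>k. ennreal (erlang_density k l s)) * indicator {..t} s \<partial>lborel)"
    by (subst nn_integral_suminf[symmetric]) auto
  also have "\<dots> = (\<integral>\<^sup>+ s. ennreal l * indicator {0..t} s \<partial>lborel)"
    using density_sum by (intro nn_integral_cong) (auto simp: erlang_density_def indicator_def)
  also have "\<dots> = ennreal (l * t)"
    using l t by (simp add: nn_integral_cmult_indicator ennreal_mult)
  finally show ?thesis .
qed

lemma nn_integral_pair_fst_above_threshold:
  fixes G :: "real measure" and H :: "'b::linorder_topology measure" and c :: 'b
  assumes "prob_space G" "sets G = sets borel" "AE s in G. 0 \<le> s" "integrable G (\<lambda>s. s)"
    and "prob_space H" "sets H = sets borel"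
  shows "(\<integral>\<^sup>+ z. (if c < snd z then ennreal (fst z) else 0) \<partial>(G \<Otimes>\<^sub>M H))
       = ennreal ((\<integral>s. s \<partial>G) * (1 - measure H {..c}))"
proof -
  interpret G: prob_space G by fact
  interpret H: prob_space H by fact
  interpret GH: pair_prob_space G H ..
  have [measurable_cong]: "sets G = sets borel" "sets H = sets borel"
    using assms by auto
  have above_c: "emeasure H {c<..} = ennreal (1 - measure H {..c})"
  proof -
    have "{c<..} = space H - {..c}"
      using sets_eq_imp_space_eq[OF \<open>sets H = sets borel\<close>] by auto
    then show ?thesis
      using H.prob_compl[of "{..c}"] by (simp add: H.emeasure_eq_measure)
  qed
  have "(\<integral>\<^sup>+ z. (if c < snd z then ennreal (fst z) else 0) \<partial>(G \<Otimes>\<^sub>M H))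
      = (\<integral>\<^sup>+ s. \<integral>\<^sup>+ y. ennreal s * indicator {c<..} y \<partial>H \<partial>G)"
    by (subst H.nn_integral_fst[symmetric]) (auto intro!: nn_integral_cong simp: indicator_def)
  also have "\<dots> = (\<integral>\<^sup>+ s. ennreal s * emeasure H {c<..} \<partial>G)"
    by (simp add: nn_integral_cmult_indicator)
  also have "\<dots> = (\<integral>\<^sup>+ s. ennreal s \<partial>G) * emeasure H {c<..}"
    by (rule nn_integral_multc) simp
  also have "\<dots> = ennreal ((\<integral>s. s \<partial>G) * (1 - measure H {..c}))"
    using assms(3,4) above_c
    by (simp add: nn_integral_eq_integral integral_nonneg_AE ennreal_mult)
  finally show ?thesis .
qed

lemma integral_le_of_nn_integral_le:
  fixes f :: "'a \<Rightarrow> real"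
  assumes "\<And>x. 0 \<le> f x" and "(\<integral>\<^sup>+ x. ennreal (f x) \<partial>M) \<le> ennreal c" and "0 \<le> c"
  shows "integral\<^sup>L M f \<le> c"
proof (cases "integrable M f")
  case True
  then have "integral\<^sup>L M f = enn2real (\<integral>\<^sup>+ x. ennreal (f x) \<partial>M)"
    using assms(1) by (intro integral_eq_nn_integral) auto
  also have "\<dots> \<le> c"
    using assms(2,3) enn2real_mono[OF assms(2)] by simp
  finally show ?thesis .
qed (simp add: not_integrable_integral_eq \<open>0 \<le> c\<close>)

locale mg1h_input = prob_space M
  for M :: "'a measure"
    and A S :: "nat \<Rightarrow> 'a \<Rightarrow> real" and Y :: "nat \<Rightarrow> 'a \<Rightarrow> ereal"
    and lam :: real and Gm :: "real measure" and Hm :: "ereal measure" +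
  assumes lam_pos: "0 < lam"
    and prob_space_G: "prob_space Gm" and sets_G: "sets Gm = sets borel"
    and AE_G_nonneg: "AE s in Gm. 0 \<le> s"
    and prob_space_H: "prob_space Hm" and sets_H: "sets Hm = sets borel"
    and measurable_A: "\<And>n. A n \<in> borel_measurable M"
    and measurable_S: "\<And>n. S n \<in> borel_measurable M"
    and measurable_Y: "\<And>n. Y n \<in> borel_measurable M"
    and indep_customers: "indep_vars (\<lambda>_. borel \<Otimes>\<^sub>M (borel \<Otimes>\<^sub>M borel))
           (\<lambda>n \<omega>. (A n \<omega>, S n \<omega>, Y n \<omega>)) UNIV"
    and distr_customer: "\<And>n. distr M (borel \<Otimes>\<^sub>M (borel \<Otimes>\<^sub>M borel)) (\<lambda>\<omega>. (A n \<omega>, S n \<omega>, Y n \<omega>))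
           = density lborel (exponential_density lam) \<Otimes>\<^sub>M (Gm \<Otimes>\<^sub>M Hm)"
begin

declare measurable_A[measurable] measurable_S[measurable] measurable_Y[measurable]
  sets_G[measurable_cong] sets_H[measurable_cong]

abbreviation "Exp \<equiv> density lborel (exponential_density lam)"

sublocale G: prob_space Gm by (fact prob_space_G)
sublocale H: prob_space Hm by (fact prob_space_H)
sublocale GH: pair_prob_space Gm Hm ..
sublocale Exp: prob_space Exp using lam_pos by (rule prob_space_exponential_density)
sublocale Exp_GH: pair_prob_space Exp "Gm \<Otimes>\<^sub>M Hm" ..


definition arrival :: "nat \<Rightarrow> 'a \<Rightarrow> real" where
  "arrival k \<omega> = arrival_time (\<lambda>n. A n \<omega>) k"

lemma arrival_eq_sum: "arrival k = (\<lambda>\<omega>. \<Sum>i\<le>k. A i \<omega>)"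
  by (simp add: fun_eq_iff arrival_def arrival_time_def)

lemma measurable_arrival[measurable]: "arrival k \<in> borel_measurable M"
  unfolding arrival_eq_sum by measurable

lemma distr_A: "distr M lborel (A n) = Exp"
proof -
  have "distr M lborel (A n)
      = distr (distr M (borel \<Otimes>\<^sub>M (borel \<Otimes>\<^sub>M borel)) (\<lambda>\<omega>. (A n \<omega>, S n \<omega>, Y n \<omega>))) lborel fst"
    by (subst distr_distr) (auto simp: comp_def)
  also have "\<dots> = distr (Exp \<Otimes>\<^sub>M (Gm \<Otimes>\<^sub>M Hm)) Exp fst"
    unfolding distr_customer by (rule distr_cong) auto
  also have "\<dots> = Exp"
    by (rule prob_space.distr_pair_fst) (fact GH.prob_space_axioms)
  finally show ?thesis .
qed

lemma indep_A: "indep_vars (\<lambda>_. borel) A UNIV"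
  using indep_vars_compose2[OF indep_customers, of "\<lambda>_. fst"] by simp

lemma distributed_arrival:
  "distributed M lborel (arrival k) (erlang_density k lam)"
  using exponential_distributed_sum[where I="{..k}" and X=A and l=lam] lam_pos distr_A
    indep_vars_subset[OF indep_A]
  by (simp add: arrival_eq_sum distributed_def)

lemma AE_arrival_neq: "AE \<omega> in M. arrival k \<omega> \<noteq> t"
proof -
  have law: "distr M lborel (arrival k) = density lborel (erlang_density k lam)"
    using distributed_arrival[of k] by (simp add: distributed_def)
  have "AE s in distr M lborel (arrival k). s \<noteq> t"
    unfolding law by (subst AE_density) (auto intro: eventually_mono[OF AE_lborel_singleton[of t]])
  then show ?thesis
    by (rule AE_distrD[rotated]) measurable
qed

lemma AE_nonneg: "AE \<omega> in M. \<forall>i. 0 \<le> A i \<omega> \<and> 0 \<le> S i \<omega>"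
proof (subst AE_all_countable, intro allI)
  fix i
  have "AE a in Exp. 0 \<le> a"
    by (subst AE_density) (auto simp: exponential_density_def)
  moreover have "AE z in Gm \<Otimes>\<^sub>M Hm. 0 \<le> fst z"
    using AE_G_nonneg by (subst GH.AE_pair_iff[symmetric]) auto
  moreover have "{p \<in> space (Exp \<Otimes>\<^sub>M (Gm \<Otimes>\<^sub>M Hm)). 0 \<le> fst p \<and> 0 \<le> fst (snd p)}
      \<in> sets (Exp \<Otimes>\<^sub>M (Gm \<Otimes>\<^sub>M Hm))"
    by measurable
  ultimately have "AE p in Exp \<Otimes>\<^sub>M (Gm \<Otimes>\<^sub>M Hm). 0 \<le> fst p \<and> 0 \<le> fst (snd p)"
    by (subst Exp_GH.AE_pair_iff[symmetric]) (auto elim!: eventually_mono)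
  then have "AE p in distr M (borel \<Otimes>\<^sub>M (borel \<Otimes>\<^sub>M borel)) (\<lambda>\<omega>. (A i \<omega>, S i \<omega>, Y i \<omega>)).
      0 \<le> fst p \<and> 0 \<le> fst (snd p)"
    by (simp only: distr_customer)
  from AE_distrD[OF _ this]
  have "AE \<omega> in M. 0 \<le> fst (A i \<omega>, S i \<omega>, Y i \<omega>) \<and> 0 \<le> fst (snd (A i \<omega>, S i \<omega>, Y i \<omega>))"
    by measurable
  then show "AE \<omega> in M. 0 \<le> A i \<omega> \<and> 0 \<le> S i \<omega>"
    by simp
qed

text \<open>Independence is stated for variables of a common type, so the elapsed time is
  padded to a triple.\<close>
lemma indep_elapsed_customer:
  "indep_var (borel \<Otimes>\<^sub>M (borel \<Otimes>\<^sub>M borel)) (\<lambda>\<omega>. (\<Sum>i<k. A i \<omega>, 0::real, 0::ereal))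
     (borel \<Otimes>\<^sub>M (borel \<Otimes>\<^sub>M borel)) (\<lambda>\<omega>. (A k \<omega>, S k \<omega>, Y k \<omega>))"
proof -
  have "indep_var (borel \<Otimes>\<^sub>M (borel \<Otimes>\<^sub>M borel))
      ((\<lambda>c. (\<Sum>i<k. fst (c i), 0::real, 0::ereal)) \<circ> (\<lambda>\<omega>. restrict (\<lambda>i. (A i \<omega>, S i \<omega>, Y i \<omega>)) {..<k}))
      (borel \<Otimes>\<^sub>M (borel \<Otimes>\<^sub>M borel)) ((\<lambda>c. c k) \<circ> (\<lambda>\<omega>. restrict (\<lambda>i. (A i \<omega>, S i \<omega>, Y i \<omega>)) {k}))"
    by (rule indep_var_compose[OF indep_var_restrict[OF indep_customers]]) auto
  then show ?thesis
    by (simp add: comp_def)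
qed

text \<open>The time elapsed before customer k arrives is independent of customer k, whose
  interarrival time is in turn independent of its service and patience times.\<close>
lemma nn_integral_elapsed_customer_factor:
  fixes f :: "real \<times> real \<Rightarrow> ennreal" and g :: "real \<times> ereal \<Rightarrow> ennreal"
  assumes [measurable]: "f \<in> borel_measurable (borel \<Otimes>\<^sub>M borel)"
    and [measurable]: "g \<in> borel_measurable (borel \<Otimes>\<^sub>M borel)"
  shows "(\<integral>\<^sup>+\<omega>. f (\<Sum>i<k. A i \<omega>, A k \<omega>) * g (S k \<omega>, Y k \<omega>) \<partial>M)
       = (\<integral>\<^sup>+\<omega>. \<integral>\<^sup>+a. f (\<Sum>i<k. A i \<omega>, a) \<partial>Exp \<partial>M) * (\<integral>\<^sup>+z. g z \<partial>(Gm \<Otimes>\<^sub>M Hm))"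
proof -
  let ?B3 = "borel \<Otimes>\<^sub>M (borel \<Otimes>\<^sub>M borel) :: (real \<times> real \<times> ereal) measure"
  let ?T = "\<lambda>\<omega>. (\<Sum>i<k. A i \<omega>, 0::real, 0::ereal)"
  have joint: "distr M (?B3 \<Otimes>\<^sub>M ?B3) (\<lambda>\<omega>. (?T \<omega>, A k \<omega>, S k \<omega>, Y k \<omega>))
      = distr M ?B3 ?T \<Otimes>\<^sub>M (Exp \<Otimes>\<^sub>M (Gm \<Otimes>\<^sub>M Hm))"
    using indep_elapsed_customer[of k] distr_customer[of k] by (simp add: indep_var_distribution_eq)
  have "(\<integral>\<^sup>+\<omega>. f (\<Sum>i<k. A i \<omega>, A k \<omega>) * g (S k \<omega>, Y k \<omega>) \<partial>M)
      = (\<integral>\<^sup>+p. f (fst (fst p), fst (snd p)) * g (snd (snd p))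
           \<partial>distr M (?B3 \<Otimes>\<^sub>M ?B3) (\<lambda>\<omega>. (?T \<omega>, A k \<omega>, S k \<omega>, Y k \<omega>)))"
    by (subst nn_integral_distr) auto
  also have "\<dots> = (\<integral>\<^sup>+q. \<integral>\<^sup>+a. f (fst q, a) \<partial>Exp \<partial>distr M ?B3 ?T) * (\<integral>\<^sup>+z. g z \<partial>(Gm \<Otimes>\<^sub>M Hm))"
    unfolding joint
    by (rule nn_integral_pair_pair_mult[where f="\<lambda>(q, a). f (fst q, a)", simplified])
      (auto intro: prob_space_distr GH.prob_space_axioms Exp.prob_space_axioms)
  also have "(\<integral>\<^sup>+q. \<integral>\<^sup>+a. f (fst q, a) \<partial>Exp \<partial>distr M ?B3 ?T) = (\<integral>\<^sup>+\<omega>. \<integral>\<^sup>+a. f (\<Sum>i<k. A i \<omega>, a) \<partial>Exp \<partial>M)"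
  proof -
    have "(\<lambda>(q, a). f (fst q, a)) \<in> borel_measurable (?B3 \<Otimes>\<^sub>M Exp)"
      by measurable
    from Exp.borel_measurable_nn_integral_fst[OF this]
    have inner: "(\<lambda>q. \<integral>\<^sup>+a. f (fst q, a) \<partial>Exp) \<in> borel_measurable (distr M ?B3 ?T)"
      by simp
    show ?thesis
      by (subst nn_integral_distr[OF _ inner]) auto
  qed
  finally show ?thesis .
qed

lemma nn_integral_admitted_le:
  assumes "0 \<le> t"
  shows "(\<integral>\<^sup>+\<omega>. (if arrival k \<omega> \<le> t \<and> ereal (x - arrival k \<omega>) \<le> Y k \<omega>
              then ennreal (S k \<omega>) else 0) \<partial>M)
    \<le> ennreal (erlang_CDF k lam t)
        * (\<integral>\<^sup>+z. (if ereal (x - t) < snd z then ennreal (fst z) else 0) \<partial>(Gm \<Otimes>\<^sub>M Hm))"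
proof -
  define arrived :: "real \<times> real \<Rightarrow> ennreal" where
    "arrived p = (if fst p + snd p \<le> t then 1 else 0)" for p
  define patient_work :: "real \<times> ereal \<Rightarrow> ennreal" where
    "patient_work z = (if ereal (x - t) < snd z then ennreal (fst z) else 0)" for z
  have [measurable]: "arrived \<in> borel_measurable (borel \<Otimes>\<^sub>M borel)"
    unfolding arrived_def by measurable
  have [measurable]: "patient_work \<in> borel_measurable (borel \<Otimes>\<^sub>M borel)"
    unfolding patient_work_def by measurable
  have arrival_split: "arrival k \<omega> = (\<Sum>i<k. A i \<omega>) + A k \<omega>" for \<omega>
    by (simp add: arrival_def arrival_time_eq_sum_lessThan)
  have prob_arrived: "(\<integral>\<^sup>+\<omega>. \<integral>\<^sup>+a. arrived (\<Sum>i<k. A i \<omega>, a) \<partial>Exp \<partial>M) = ennreal (erlang_CDF k lam t)"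
  proof -
    have "(\<integral>\<^sup>+z. 1 \<partial>(Gm \<Otimes>\<^sub>M Hm)) = 1"
      using GH.emeasure_space_1 by simp
    then have "(\<integral>\<^sup>+\<omega>. \<integral>\<^sup>+a. arrived (\<Sum>i<k. A i \<omega>, a) \<partial>Exp \<partial>M)
        = (\<integral>\<^sup>+\<omega>. \<integral>\<^sup>+a. arrived (\<Sum>i<k. A i \<omega>, a) \<partial>Exp \<partial>M) * (\<integral>\<^sup>+z. 1 \<partial>(Gm \<Otimes>\<^sub>M Hm))"
      by (simp only: mult_1_right)
    also have "\<dots> = (\<integral>\<^sup>+\<omega>. arrived (\<Sum>i<k. A i \<omega>, A k \<omega>) * 1 \<partial>M)"
      by (rule nn_integral_elapsed_customer_factor[of arrived "\<lambda>_. 1" k, symmetric]) simp_all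
    also have "\<dots> = (\<integral>\<^sup>+\<omega>. indicator {\<omega> \<in> space M. arrival k \<omega> \<le> t} \<omega> \<partial>M)"
      by (intro nn_integral_cong) (simp add: arrived_def arrival_split indicator_def)
    also have "\<dots> = emeasure M {\<omega> \<in> space M. arrival k \<omega> \<le> t}"
      by (rule nn_integral_indicator) measurable
    also have "\<dots> = ennreal (erlang_CDF k lam t)"
      using erlang_distributed_le[OF distributed_arrival lam_pos \<open>0 \<le> t\<close>]
      by (simp add: emeasure_eq_measure)
    finally show ?thesis .
  qed
  have "(\<integral>\<^sup>+\<omega>. (if arrival k \<omega> \<le> t \<and> ereal (x - arrival k \<omega>) \<le> Y k \<omega>
              then ennreal (S k \<omega>) else 0) \<partial>M)
      \<le> (\<integral>\<^sup>+\<omega>. arrived (\<Sum>i<k. A i \<omega>, A k \<omega>) * patient_work (S k \<omega>, Y k \<omega>) \<partial>M)"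
    using AE_arrival_neq[of k t]
  proof (rule nn_integral_mono_AE[OF eventually_mono])
    fix \<omega> assume "arrival k \<omega> \<noteq> t"
    moreover have "ereal (x - t) < Y k \<omega>"
      if "arrival k \<omega> < t" "ereal (x - arrival k \<omega>) \<le> Y k \<omega>"
    proof -
      have "ereal (x - t) < ereal (x - arrival k \<omega>)"
        using that(1) by simp
      then show ?thesis
        using that(2) by (rule less_le_trans)
    qed
    ultimately show "(if arrival k \<omega> \<le> t \<and> ereal (x - arrival k \<omega>) \<le> Y k \<omega> then ennreal (S k \<omega>) else 0)
        \<le> arrived (\<Sum>i<k. A i \<omega>, A k \<omega>) * patient_work (S k \<omega>, Y k \<omega>)"
      unfolding arrived_def patient_work_def arrival_split by auto
  qed
  also have "\<dots> = (\<integral>\<^sup>+\<omega>. \<integral>\<^sup>+a. arrived (\<Sum>i<k. A i \<omega>, a) \<partial>Exp \<partial>M) * (\<integral>\<^sup>+z. patient_work z \<partial>(Gm \<Otimes>\<^sub>M Hm))"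
    by (rule nn_integral_elapsed_customer_factor) simp_all
  finally show ?thesis
    unfolding prob_arrived patient_work_def .
qed

lemma nn_integral_workload_le:
  assumes "0 \<le> t" and "t \<le> x"
  shows "(\<integral>\<^sup>+\<omega>. ennreal (workload x (\<lambda>n. A n \<omega>) (\<lambda>n. S n \<omega>) (\<lambda>n. Y n \<omega>) t) \<partial>M)
    \<le> ennreal (x - t) + ennreal (lam * t)
        * (\<integral>\<^sup>+z. (if ereal (x - t) < snd z then ennreal (fst z) else 0) \<partial>(Gm \<Otimes>\<^sub>M Hm))"
    (is "_ \<le> _ + _ * ?C")
proof -
  define admitted where "admitted k \<omega> =
    (if arrival k \<omega> \<le> t \<and> ereal (x - arrival k \<omega>) \<le> Y k \<omega>
     then ennreal (S k \<omega>) else 0)" for k \<omega>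
  have [measurable]: "admitted k \<in> borel_measurable M" for k
    unfolding admitted_def by measurable
  have "(\<integral>\<^sup>+\<omega>. ennreal (workload x (\<lambda>n. A n \<omega>) (\<lambda>n. S n \<omega>) (\<lambda>n. Y n \<omega>) t) \<partial>M)
      \<le> (\<integral>\<^sup>+\<omega>. ennreal (x - t) + (\<Sum>k. admitted k \<omega>) \<partial>M)"
    using AE_nonneg
  proof (rule nn_integral_mono_AE[OF eventually_mono])
    fix \<omega> assume "\<forall>i. 0 \<le> A i \<omega> \<and> 0 \<le> S i \<omega>"
    then show "ennreal (workload x (\<lambda>n. A n \<omega>) (\<lambda>n. S n \<omega>) (\<lambda>n. Y n \<omega>) t)
        \<le> ennreal (x - t) + (\<Sum>k. admitted k \<omega>)"
      unfolding admitted_def arrival_def by (intro workload_le_initial_plus_admitted \<open>t \<le> x\<close>) auto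
  qed
  also have "\<dots> = ennreal (x - t) + (\<Sum>k. \<integral>\<^sup>+\<omega>. admitted k \<omega> \<partial>M)"
    by (subst nn_integral_add) (auto simp: nn_integral_suminf emeasure_space_1)
  also have "\<dots> \<le> ennreal (x - t) + (\<Sum>k. ennreal (erlang_CDF k lam t) * ?C)"
    unfolding admitted_def
    by (intro add_left_mono suminf_le nn_integral_admitted_le summableI \<open>0 \<le> t\<close>)
  also have "\<dots> = ennreal (x - t) + ennreal (lam * t) * ?C"
    by (simp only: ennreal_suminf_multc suminf_erlang_CDF[OF lam_pos \<open>0 \<le> t\<close>])
  finally show ?thesis .
qed

end

theorem lemma5:
  fixes M :: "'a measure"
    and A S :: "nat \<Rightarrow> 'a \<Rightarrow> real"
    and Y :: "nat \<Rightarrow> 'a \<Rightarrow> ereal"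
    and Gm :: "real measure" and Hm :: "ereal measure"
    and lam x :: real
  assumes "prob_space M"
    and "lam > 0"
    and "prob_space Gm" and "sets Gm = sets borel"
    and "AE s in Gm. 0 \<le> s"
    and "prob_space Hm" and "sets Hm = sets borel"
    and "AE y in Hm. 0 < y"
    and "\<And>n. A n \<in> borel_measurable M"
    and "\<And>n. S n \<in> borel_measurable M"
    and "\<And>n. Y n \<in> borel_measurable M"
    and "prob_space.indep_vars M (\<lambda>_. borel \<Otimes>\<^sub>M (borel \<Otimes>\<^sub>M borel))
           (\<lambda>n \<omega>. (A n \<omega>, S n \<omega>, Y n \<omega>)) UNIV"
    and "\<And>n. distr M (borel \<Otimes>\<^sub>M (borel \<Otimes>\<^sub>M borel)) (\<lambda>\<omega>. (A n \<omega>, S n \<omega>, Y n \<omega>))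
           = density lborel (exponential_density lam) \<Otimes>\<^sub>M (Gm \<Otimes>\<^sub>M Hm)"
    and "integrable Gm (\<lambda>s. s)"
    and "x > 1"
  shows "(\<integral>\<omega>. workload x (\<lambda>n. A n \<omega>) (\<lambda>n. S n \<omega>) (\<lambda>n. Y n \<omega>) 1 \<partial>M) - x + 1
           \<le> lam * (\<integral>s. s \<partial>Gm) * (1 - measure Hm {..ereal (x - 1)})"
proof -
  interpret mg1h_input M A S Y lam Gm Hm
    using assms(1-7,9-13) by (intro mg1h_input.intro mg1h_input_axioms.intro) assumption+
  define c where "c = (\<integral>s. s \<partial>Gm) * (1 - measure Hm {..ereal (x - 1)})"
  have "0 \<le> c"
    unfolding c_def using assms(5) by (intro mult_nonneg_nonneg integral_nonneg_AE) (auto simp: H.prob_le_1)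
  have "(\<integral>\<^sup>+\<omega>. ennreal (workload x (\<lambda>n. A n \<omega>) (\<lambda>n. S n \<omega>) (\<lambda>n. Y n \<omega>) 1) \<partial>M)
      \<le> ennreal (x - 1) + ennreal lam * ennreal c"
    using nn_integral_workload_le[of 1 x] \<open>x > 1\<close>
      nn_integral_pair_fst_above_threshold[OF assms(3-5,14,6,7), of "ereal (x - 1)"]
    by (simp add: c_def)
  also have "\<dots> = ennreal (x - 1 + lam * c)"
    using \<open>x > 1\<close> \<open>lam > 0\<close> \<open>0 \<le> c\<close> by (simp add: ennreal_mult ennreal_plus)
  finally have "(\<integral>\<omega>. workload x (\<lambda>n. A n \<omega>) (\<lambda>n. S n \<omega>) (\<lambda>n. Y n \<omega>) 1 \<partial>M) \<le> x - 1 + lam * c"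
    using \<open>x > 1\<close> \<open>lam > 0\<close> \<open>0 \<le> c\<close>
    by (intro integral_le_of_nn_integral_le) (auto simp: workload_def Let_def)
  then show ?thesis
    unfolding c_def by (simp add: mult.assoc)
qed

end
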